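(* For every integer $\nu \ge 0$ the following identities hold: \[ \sum_{k=0}^{2\nu} (-1)^{k}\, \binom{2\nu+2}{k+2}\, 2^{-k}\, \binom{2k}{k}=\frac{1}{3}(4\nu+3)\,\frac{(\frac{3}{2})_{\nu}}{(1)_{\nu}}, \qquad \sum_{k=0}^{2\nu+1} (-1)^{k} \,\binom{2\nu+3}{k+2} \,2^{-k} \,\binom{2k}{k}=2\,\frac{(\frac{5}{2})_{\nu}}{(1)_{\nu}}, \] \[ \sum_{k=0}^{2\nu} (-1)^{k}\, \binom{2\nu+3}{k+3}\, 2^{-k}\, \binom{2k}{k}=\frac{1}{5}(8\nu+5)\,\frac{(\frac{5}{2})_{\nu}}{(1)_{\nu}}, \qquad \sum_{k=0}^{2\nu+1} (-1)^{k} \,\binom{2\nu+4}{k+3} \,2^{-k} \,\binom{2k}{k}=\frac{1}{5}(8\nu+15)\,\frac{(\frac{5}{2})_{\nu}}{(1)_{\nu}}. \]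
   Context: For a complex number $a$ and integer $n\ge 0$, $(a)_n$ denotes the Pochhammer symbol: $(a)_0=1$ and $(a)_n=a(a+1)\cdots(a+n-1)$ for $n\ge1$; in particular $(1)_\nu=\nu!$. *)

theory Defs
  imports Complex_Main
begin

end

theory Submission
  imports Defs
begin

(* Write S(n, j) = shifted_sum n j = \<Sum>\<^sub>k (-1)^k C(n, k + j) 2^(-k) C(2k, k); the four sums
   are S(2\<nu>+2, 2), S(2\<nu>+3, 2), S(2\<nu>+3, 3) and S(2\<nu>+4, 3). For j = 0 Zeilberger's algorithm gives
   (n + 2) S(n + 2, 0) = (n + 1) S(n, 0), hence S(2m, 0) = (1/2)\<^sub>m / m! and S(2m + 1, 0) = 0.
   Pascal's rule S(n + 1, j + 1) = S(n, j + 1) + S(n, j) then yields, one j at a time, closed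
   forms p(m) (1/2)\<^sub>m / m! for S(2m, j) and S(2m + 1, j) with polynomials p, and
   (3/2)\<^sub>\<nu>, (5/2)\<^sub>\<nu> are polynomial multiples of (1/2)\<^sub>\<nu>. *)

definition pochhammer_half_ratio :: "nat \<Rightarrow> real" where
  "pochhammer_half_ratio m = pochhammer (1/2) m / pochhammer 1 m"

lemma pochhammer_half_ratio_Suc_eq:
  "pochhammer_half_ratio (Suc m) = (2 * real m + 1) / (2 * real m + 2) * pochhammer_half_ratio m"
  unfolding pochhammer_half_ratio_def pochhammer_fact[symmetric]
  by (simp add: pochhammer_rec' field_simps)

lemma pochhammer_half_ratio_Suc:
  "(2 * real m + 2) * pochhammer_half_ratio (Suc m) = (2 * real m + 1) * pochhammer_half_ratio m"
  by (simp add: pochhammer_half_ratio_Suc_eq add_nonneg_eq_0_iff)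

lemma of_nat_central_binomial: "real ((2 * k) choose k) = 4 ^ k * pochhammer_half_ratio k"
proof -
  have "real ((2 * k) choose k) = fact (2 * k) / (fact k * fact k)"
    by (simp add: binomial_fact)
  also have "\<dots> = 4 ^ k * pochhammer_half_ratio k"
    by (simp add: fact_double pochhammer_half_ratio_def pochhammer_fact[symmetric] power_mult)
  finally show ?thesis .
qed

lemma pochhammer_plus_one:
  fixes a :: "'a::comm_semiring_1"
  shows "a * pochhammer (a + 1) n = (a + of_nat n) * pochhammer a n"
  by (metis pochhammer_rec pochhammer_rec')

lemma pochhammer_three_halves_ratio:
  "pochhammer (3/2) n / pochhammer 1 n = (2 * real n + 1) * pochhammer_half_ratio n"
proof -
  have "pochhammer (3/2 :: real) n = (2 * real n + 1) * pochhammer (1/2) n"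
    using pochhammer_plus_one[of "1/2 :: real" n] by (simp add: field_simps)
  then show ?thesis by (simp add: pochhammer_half_ratio_def)
qed

lemma pochhammer_five_halves_ratio:
  "pochhammer (5/2) n / pochhammer 1 n
     = (2 * real n + 1) * (2 * real n + 3) / 3 * pochhammer_half_ratio n"
proof -
  have "pochhammer (5/2 :: real) n = (2 * real n + 3) / 3 * pochhammer (3/2) n"
    using pochhammer_plus_one[of "3/2 :: real" n] by (simp add: field_simps)
  then have "pochhammer (5/2) n / pochhammer 1 n
               = (2 * real n + 3) / 3 * (pochhammer (3/2) n / pochhammer 1 n)"
    by (simp only: times_divide_eq_right)
  then show ?thesis by (simp add: pochhammer_three_halves_ratio)
qed

lemma gbinomial_Suc_absorb:
  fixes a :: "'a::field_char_0"
  shows "of_nat (Suc k) * (a gchoose Suc k) = (a - of_nat k) * (a gchoose k)"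
  by (simp only: gbinomial_absorption gbinomial_absorb_comp)

lemma gbinomial_absorb_comp_twice:
  fixes a :: "'a::field_char_0"
  shows "(a - of_nat k) * (a - 1 - of_nat k) * (a gchoose k) = a * (a - 1) * ((a - 2) gchoose k)"
proof -
  have "(a - of_nat k) * (a - 1 - of_nat k) * (a gchoose k)
          = (a - 1 - of_nat k) * (a * ((a - 1) gchoose k))"
    by (simp add: gbinomial_absorb_comp)
  also have "\<dots> = a * ((a - 1 - of_nat k) * ((a - 1) gchoose k))" by (simp add: ac_simps)
  also have "\<dots> = a * (a - 1) * ((a - 2) gchoose k)"
    using gbinomial_absorb_comp[of "a - 1" k] by (simp add: diff_diff_eq)
  finally show ?thesis .
qed

definition central_weight :: "nat \<Rightarrow> real" where
  "central_weight k = (-1/2) ^ k * real ((2 * k) choose k)"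

lemma central_weight_altdef: "central_weight k = (-2) ^ k * pochhammer_half_ratio k"
  by (simp add: central_weight_def of_nat_central_binomial power_mult_distrib[symmetric])

lemma central_weight_Suc:
  "real (Suc k) * central_weight (Suc k) = - (2 * real k + 1) * central_weight k"
proof -
  have "real (Suc k) * central_weight (Suc k)
          = - ((-2) ^ k * ((2 * real k + 2) * pochhammer_half_ratio (Suc k)))"
    by (simp add: central_weight_altdef algebra_simps)
  also have "\<dots> = - ((-2) ^ k * ((2 * real k + 1) * pochhammer_half_ratio k))"
    by (simp only: pochhammer_half_ratio_Suc)
  also have "\<dots> = - (2 * real k + 1) * central_weight k"
    by (simp add: central_weight_altdef algebra_simps)
  finally show ?thesis .
qed

definition shifted_sum :: "nat \<Rightarrow> nat \<Rightarrow> real" where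
  "shifted_sum n j = (\<Sum>k\<le>n. real (n choose (k + j)) * central_weight k)"

lemma shifted_sum_eq_sum_atMost:
  assumes "n \<le> M + j"
  shows "(\<Sum>k\<le>M. real (n choose (k + j)) * central_weight k) = shifted_sum n j"
proof -
  have "(\<Sum>k\<le>M. real (n choose (k + j)) * central_weight k)
          = (\<Sum>k\<le>M + n. real (n choose (k + j)) * central_weight k)"
    using assms by (intro sum.mono_neutral_left) auto
  also have "\<dots> = shifted_sum n j"
    unfolding shifted_sum_def by (intro sum.mono_neutral_right) auto
  finally show ?thesis .
qed

lemma shifted_sum_0_Suc: "shifted_sum 0 (Suc j) = 0"
  by (simp add: shifted_sum_def)

lemma shifted_sum_Suc_Suc: "shifted_sum (Suc n) (Suc j) = shifted_sum n (Suc j) + shifted_sum n j"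
proof -
  have "shifted_sum (Suc n) (Suc j)
          = (\<Sum>k\<le>Suc n. real (n choose (k + Suc j)) * central_weight k)
            + (\<Sum>k\<le>Suc n. real (n choose (k + j)) * central_weight k)"
    unfolding shifted_sum_def sum.distrib[symmetric]
    by (intro sum.cong) (simp_all add: algebra_simps)
  also have "\<dots> = shifted_sum n (Suc j) + shifted_sum n j"
    using shifted_sum_eq_sum_atMost[of n "Suc n" "Suc j"] shifted_sum_eq_sum_atMost[of n "Suc n" j]
    by simp
  finally show ?thesis .
qed

(* Found by Zeilberger's algorithm applied to shifted_sum n 0. *)
definition zeilberger_certificate :: "nat \<Rightarrow> nat \<Rightarrow> real" where
  "zeilberger_certificate n k = - (real k)\<^sup>2 * real ((n + 2) choose k) * central_weight k"

lemma zeilberger_certificate_diff: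
  "real (n + 2) * (real (n + 2) * real ((n + 2) choose k) - real (n + 1) * real (n choose k))
     * central_weight k = zeilberger_certificate n (Suc k) - zeilberger_certificate n k"
proof -
  define a where "a = real (n + 2)"
  have choose_top: "real ((n + 2) choose i) = a gchoose i" for i
    by (simp only: a_def binomial_gbinomial)
  have choose_bottom: "real (n choose k) = (a - 2) gchoose k"
    by (simp add: a_def binomial_gbinomial)
  have "zeilberger_certificate n (Suc k)
          = - (real (Suc k) * (a gchoose Suc k)) * (real (Suc k) * central_weight (Suc k))"
    unfolding zeilberger_certificate_def choose_top by (simp add: power2_eq_square del: of_nat_Suc)
  also have "\<dots> = (a - real k) * (2 * real k + 1) * (a gchoose k) * central_weight k"
    by (simp only: gbinomial_Suc_absorb central_weight_Suc) (simp add: algebra_simps)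
  finally have "zeilberger_certificate n (Suc k) - zeilberger_certificate n k
                  = ((a - real k) * (2 * real k + 1) + (real k)\<^sup>2) * (a gchoose k)
                    * central_weight k"
    unfolding zeilberger_certificate_def choose_top by (simp add: algebra_simps)
  also have "((a - real k) * (2 * real k + 1) + (real k)\<^sup>2) * (a gchoose k)
               = a * (a * (a gchoose k) - (a - 1) * ((a - 2) gchoose k))"
    using gbinomial_absorb_comp_twice[of a k] by (simp add: algebra_simps power2_eq_square)
  finally show ?thesis unfolding choose_top choose_bottom a_def by simp
qed

lemma shifted_sum_0_step: "real (n + 2) * shifted_sum (n + 2) 0 = real (n + 1) * shifted_sum n 0"
proof -
  have bottom: "shifted_sum n 0 = (\<Sum>k\<le>n + 2. real (n choose k) * central_weight k)"
    using shifted_sum_eq_sum_atMost[of n "n + 2" 0] by simp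
  have "real (n + 2) * (real (n + 2) * shifted_sum (n + 2) 0 - real (n + 1) * shifted_sum n 0)
          = (\<Sum>k\<le>n + 2. real (n + 2) * (real (n + 2) * real ((n + 2) choose k)
                                         - real (n + 1) * real (n choose k)) * central_weight k)"
    unfolding bottom unfolding shifted_sum_def
    by (simp only: add_0_right sum_distrib_left sum_subtractf[symmetric])
       (intro sum.cong; simp add: algebra_simps)
  also have "\<dots> = (\<Sum>k<Suc (n + 2).
                        zeilberger_certificate n (Suc k) - zeilberger_certificate n k)"
    by (simp only: zeilberger_certificate_diff lessThan_Suc_atMost)
  also have "\<dots> = zeilberger_certificate n (Suc (n + 2)) - zeilberger_certificate n 0"
    by (rule sum_lessThan_telescope)
  also have "\<dots> = 0"
    by (simp add: zeilberger_certificate_def binomial_eq_0 del: binomial_Suc_Suc)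
  finally show ?thesis by simp
qed

lemma shifted_sum_0_closed:
  "shifted_sum (2 * m) 0 = pochhammer_half_ratio m \<and> shifted_sum (2 * m + 1) 0 = 0"
proof (induction m)
  case 0
  show ?case by (simp add: shifted_sum_def central_weight_def pochhammer_half_ratio_def)
next
  case (Suc m)
  have "(2 * real m + 2) * shifted_sum (2 * m + 2) 0 = (2 * real m + 1) * shifted_sum (2 * m) 0"
    using shifted_sum_0_step[of "2 * m"] by (simp add: algebra_simps)
  also have "\<dots> = (2 * real m + 2) * pochhammer_half_ratio (Suc m)"
    using Suc.IH by (simp add: pochhammer_half_ratio_Suc)
  finally have "shifted_sum (2 * m + 2) 0 = pochhammer_half_ratio (Suc m)"
    by (simp add: add_nonneg_eq_0_iff)
  moreover have "shifted_sum (2 * m + 3) 0 = 0"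
    using shifted_sum_0_step[of "2 * m + 1"] Suc.IH by (simp add: numeral_eq_Suc)
  ultimately show ?case by (simp add: numeral_eq_Suc)
qed

lemma shifted_sum_Suc_closed:
  assumes lower: "\<And>m. shifted_sum (2 * m) j = f m * pochhammer_half_ratio m
                        \<and> shifted_sum (2 * m + 1) j = g m * pochhammer_half_ratio m"
    and F_0: "F 0 = 0"
    and G_eq: "\<And>m. G m = F m + f m"
    and F_Suc: "\<And>m. (2 * real m + 1) * F (Suc m) = (2 * real m + 2) * (G m + g m)"
  shows "shifted_sum (2 * m) (Suc j) = F m * pochhammer_half_ratio m
         \<and> shifted_sum (2 * m + 1) (Suc j) = G m * pochhammer_half_ratio m"
proof (induction m)
  case 0
  show ?case
    using shifted_sum_Suc_Suc[of 0 j] lower[of 0] by (simp add: shifted_sum_0_Suc F_0 G_eq)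
next
  case (Suc m)
  have "(2 * real m + 2) * (F (Suc m) * pochhammer_half_ratio (Suc m))
          = (2 * real m + 1) * F (Suc m) * pochhammer_half_ratio m"
    using pochhammer_half_ratio_Suc[of m] by (metis mult.assoc mult.left_commute)
  also have "\<dots> = (2 * real m + 2) * ((G m + g m) * pochhammer_half_ratio m)"
    by (simp only: F_Suc mult.assoc)
  also have "(G m + g m) * pochhammer_half_ratio m = shifted_sum (2 * m + 2) (Suc j)"
    using shifted_sum_Suc_Suc[of "2 * m + 1" j] Suc.IH lower[of m] by (simp add: algebra_simps)
  finally have even: "shifted_sum (2 * Suc m) (Suc j) = F (Suc m) * pochhammer_half_ratio (Suc m)"
    by (simp add: add_nonneg_eq_0_iff)
  have "shifted_sum (2 * Suc m + 1) (Suc j) = G (Suc m) * pochhammer_half_ratio (Suc m)"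
    using shifted_sum_Suc_Suc[of "2 * Suc m" j] even lower[of "Suc m"]
    by (simp add: G_eq algebra_simps)
  with even show ?case ..
qed

lemma shifted_sum_1_closed:
  "shifted_sum (2 * m) 1 = 2 * real m * pochhammer_half_ratio m
   \<and> shifted_sum (2 * m + 1) 1 = (2 * real m + 1) * pochhammer_half_ratio m"
proof -
  have "shifted_sum (2 * m) 0 = 1 * pochhammer_half_ratio m
        \<and> shifted_sum (2 * m + 1) 0 = 0 * pochhammer_half_ratio m" for m
    using shifted_sum_0_closed by simp
  from shifted_sum_Suc_closed[OF this,
      where F = "\<lambda>m. 2 * real m" and G = "\<lambda>m. 2 * real m + 1"]
  show ?thesis by (simp add: algebra_simps)
qed

lemma shifted_sum_2_closed:
  "shifted_sum (2 * m) 2 = 2 * real m * (4 * real m - 1) / 3 * pochhammer_half_ratio m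
   \<and> shifted_sum (2 * m + 1) 2 = 4 * real m * (2 * real m + 1) / 3 * pochhammer_half_ratio m"
  using shifted_sum_Suc_closed[OF shifted_sum_1_closed,
      where F = "\<lambda>m. 2 * real m * (4 * real m - 1) / 3"
        and G = "\<lambda>m. 4 * real m * (2 * real m + 1) / 3"]
  by (simp add: field_simps numeral_2_eq_2)

lemma shifted_sum_3_closed:
  "shifted_sum (2 * m) 3
     = 2 * real m * (2 * real m - 2) * (8 * real m - 1) / 15 * pochhammer_half_ratio m
   \<and> shifted_sum (2 * m + 1) 3
     = 2 * real m * (8 * real m - 3) * (2 * real m + 1) / 15 * pochhammer_half_ratio m"
  using shifted_sum_Suc_closed[OF shifted_sum_2_closed,
      where F = "\<lambda>m. 2 * real m * (2 * real m - 2) * (8 * real m - 1) / 15"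
        and G = "\<lambda>m. 2 * real m * (8 * real m - 3) * (2 * real m + 1) / 15"]
  by (simp add: field_simps numeral_3_eq_3)

lemma shifted_sum_2_eq_pochhammer:
  "shifted_sum (2 * n + 2) 2 = 1/3 * (4 * real n + 3) * (pochhammer (3/2) n / pochhammer 1 n)
   \<and> shifted_sum (2 * n + 3) 2 = 2 * (pochhammer (5/2) n / pochhammer 1 n)"
proof -
  have idx: "2 * Suc n = 2 * n + 2" "2 * n + 2 + 1 = 2 * n + 3" by simp_all
  note closed = shifted_sum_2_closed[of "Suc n", unfolded idx]
  have "shifted_sum (2 * n + 2) 2
          = 1/3 * (4 * real n + 3) * ((2 * real n + 1) * pochhammer_half_ratio n)"
    unfolding closed[THEN conjunct1] pochhammer_half_ratio_Suc_eq by (simp add: field_simps)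
  moreover have "shifted_sum (2 * n + 3) 2
                   = 2 * ((2 * real n + 1) * (2 * real n + 3) / 3 * pochhammer_half_ratio n)"
    unfolding closed[THEN conjunct2] pochhammer_half_ratio_Suc_eq by (simp add: field_simps)
  ultimately show ?thesis
    unfolding pochhammer_three_halves_ratio pochhammer_five_halves_ratio ..
qed

lemma shifted_sum_3_eq_pochhammer:
  "shifted_sum (2 * n + 3) 3 = 1/5 * (8 * real n + 5) * (pochhammer (5/2) n / pochhammer 1 n)
   \<and> shifted_sum (2 * n + 4) 3
       = 1/5 * (8 * real n + 15) * (pochhammer (5/2) n / pochhammer 1 n)"
proof -
  have idx: "2 * Suc n = 2 * n + 2" "2 * n + 2 + 1 = 2 * n + 3" "2 * Suc (Suc n) = 2 * n + 4"
    by simp_all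
  have "shifted_sum (2 * n + 3) 3 = 1/5 * (8 * real n + 5)
          * ((2 * real n + 1) * (2 * real n + 3) / 3 * pochhammer_half_ratio n)"
    unfolding shifted_sum_3_closed[of "Suc n", unfolded idx, THEN conjunct2]
      pochhammer_half_ratio_Suc_eq
    by (simp add: field_simps)
  moreover have "shifted_sum (2 * n + 4) 3 = 1/5 * (8 * real n + 15)
          * ((2 * real n + 1) * (2 * real n + 3) / 3 * pochhammer_half_ratio n)"
    unfolding shifted_sum_3_closed[of "Suc (Suc n)", unfolded idx, THEN conjunct1]
      pochhammer_half_ratio_Suc_eq
    by (simp add: divide_simps) (simp add: algebra_simps)
  ultimately show ?thesis
    unfolding pochhammer_five_halves_ratio ..
qed

lemma sum_central_binomial_eq_shifted_sum:
  assumes "n \<le> M + j"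
  shows "(\<Sum>k=0..M. (-1::real) ^ k * real (n choose (k + j)) * (1/2) ^ k
                       * real ((2 * k) choose k)) = shifted_sum n j"
proof -
  have "(\<Sum>k=0..M. (-1::real) ^ k * real (n choose (k + j)) * (1/2) ^ k * real ((2 * k) choose k))
          = (\<Sum>k\<le>M. real (n choose (k + j)) * central_weight k)"
    unfolding atLeast0AtMost central_weight_def by (intro sum.cong) (simp_all add: power_minus')
  also have "\<dots> = shifted_sum n j"
    using assms by (rule shifted_sum_eq_sum_atMost)
  finally show ?thesis .
qed

theorem mainTheorem2:
  fixes \<nu> :: nat
  shows "((\<Sum>k=0..2*\<nu>. (-1::real)^k * real ((2*\<nu>+2) choose (k+2)) * (1/2)^k * real ((2*k) choose k))
           = 1/3 * (4 * real \<nu> + 3) * pochhammer (3/2) \<nu> / pochhammer 1 \<nu>) \<and>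
        ((\<Sum>k=0..2*\<nu>+1. (-1::real)^k * real ((2*\<nu>+3) choose (k+2)) * (1/2)^k * real ((2*k) choose k))
           = 2 * pochhammer (5/2) \<nu> / pochhammer 1 \<nu>) \<and>
        ((\<Sum>k=0..2*\<nu>. (-1::real)^k * real ((2*\<nu>+3) choose (k+3)) * (1/2)^k * real ((2*k) choose k))
           = 1/5 * (8 * real \<nu> + 5) * pochhammer (5/2) \<nu> / pochhammer 1 \<nu>) \<and>
        ((\<Sum>k=0..2*\<nu>+1. (-1::real)^k * real ((2*\<nu>+4) choose (k+3)) * (1/2)^k * real ((2*k) choose k))
           = 1/5 * (8 * real \<nu> + 15) * pochhammer (5/2) \<nu> / pochhammer 1 \<nu>)"
proof -
  \<comment> \<open>each inequality, read as n \<le> M + j, selects n, M and j for one of the four sums\<close>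
  have "2 * \<nu> + 2 \<le> 2 * \<nu> + 2" "2 * \<nu> + 3 \<le> 2 * \<nu> + 1 + 2"
    "2 * \<nu> + 3 \<le> 2 * \<nu> + 3" "2 * \<nu> + 4 \<le> 2 * \<nu> + 1 + 3"
    by simp_all
  note sums = this[THEN sum_central_binomial_eq_shifted_sum]
  show ?thesis
    unfolding sums using shifted_sum_2_eq_pochhammer shifted_sum_3_eq_pochhammer by simp
qed

end
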